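(* Let $\mathcal{H}$ be a finite-dimensional complex Hilbert space and $k\ge 2$. (i) A bosonic pure state $\rho\in\mathbb{P}(\mathcal{H}^{\vee k})$ is entangled if and only if it does not lie in the range of the map $\operatorname{Seg}^\vee_k:\mathbb{P}\mathcal{H}\to\mathbb{P}(\mathcal{H}^{\vee k})$, $\rho_x\mapsto\rho_{x^{k}}$, where $x^k=x\vee\cdots\vee x=x\otimes\cdots\otimes x$ ($k$ factors). (ii) A fermionic pure state $\rho\in\mathbb{P}(\mathcal{H}^{\wedge k})$ is entangled if and only if it does not lie in the range of the map $\operatorname{Seg}^\wedge_k:(\mathbb{P}\mathcal{H})^{\times k}_\circ\to\mathbb{P}(\mathcal{H}^{\wedge k})$, $(\rho_{x_1},\dots,\rho_{x_k})\mapsto\rho_{x_1\wedge\cdots\wedge x_k}$. (iii) A mixed bosonic (resp. fermionic) state on $\mathcal{H}^{\vee k}$ (resp. $\mathcal{H}^{\wedge k}$) is entangled if and only if it lies outside the convex hull of the range of $\operatorname{Seg}^\vee_k$ (resp. $\operatorname{Seg}^\wedge_k$), where pure states are identified with rank-one orthogonal projectors.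
   Context: For $0\neq x$ in a Hilbert space, $\rho_x=|x\rangle\langle x|/\|x\|^2$; pure states on a Hilbert space $V$ are identified with $\mathbb{P}V$ via $x\mapsto\rho_x$. $\mathcal{H}^{\vee k}\subset\mathcal{H}^{\otimes k}$ (resp. $\mathcal{H}^{\wedge k}$) is the subspace of totally symmetric (resp. antisymmetric) tensors, with $f_1\vee\cdots\vee f_k=\frac{1}{k!}\sum_{\sigma\in S_k}f_{\sigma(1)}\otimes\cdots\otimes f_{\sigma(k)}$ and $f_1\wedge\cdots\wedge f_k=\frac{1}{k!}\sum_{\sigma}(-1)^\sigma f_{\sigma(1)}\otimes\cdots\otimes f_{\sigma(k)}$. $(\mathbb{P}\mathcal{H})^{\times k}_\circ=\{(\rho_{x_1},\dots,\rho_{x_k}): x_1\wedge\cdots\wedge x_k\neq0\}$. S-rank: for $u\in\mathcal{H}^{\otimes k}$, the contraction $\imath_\nu u$ with $\nu\in\mathcal{H}^{\otimes(k-1)}$ is the linear extension of $\imath_{g_1\otimes\cdots\otimes g_{k-1}}(f_1\otimes\cdots\otimes f_k)=\prod_{i=1}^{k-1}\langle f_i|g_i\rangle\, f_k$; for $\sigma\in S_k$, $\sigma(f_1\otimes\cdots\otimes f_k)=f_{\sigma(1)}\otimes\cdots\otimes f_{\sigma(k)}$. The S-rank of $u$ is the maximum over $\sigma\in S_k$ of $\dim\{\imath_\nu\sigma(u):\nu\in\mathcal{H}^{\otimes(k-1)}\}$. A simple symmetric (resp. antisymmetric) tensor is a nonzero element of $\mathcal{H}^{\vee k}$ (resp.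 $\mathcal{H}^{\wedge k}$) of minimal S-rank among nonzero elements of that space. A bosonic (fermionic) pure state $\rho_x$, $0\ne x\in\mathcal{H}^{\vee k}$ (resp. $\mathcal{H}^{\wedge k}$), is simple if $x$ is a simple symmetric (resp. antisymmetric) tensor, and entangled otherwise; a mixed bosonic (fermionic) state is simple if it is a convex combination of simple bosonic (fermionic) pure states, and entangled otherwise. *)

theory Defs
  imports "HOL-Analysis.Analysis" "HOL-Combinatorics.Permutations"
begin

text \<open>The Hilbert space H is complex^'n with 'n a finite type (finite-dimensional).  An element of the k-fold tensor power of H
  is represented by its coordinate function on multi-indices, i.e. a function
  'n list \<Rightarrow> complex vanishing on lists whose length is not k.
  Operators on the k-fold tensor power are matrices indexed by pairs of multi-indices.\<close>

type_synonym 'n tensor = "'n list \<Rightarrow> complex"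
type_synonym 'n tmatrix = "'n list \<Rightarrow> 'n list \<Rightarrow> complex"

definition idx :: "nat \<Rightarrow> 'n list set" where
  "idx k = {is. length is = k}"

definition tens :: "nat \<Rightarrow> ('n::finite) tensor set" where
  "tens k = {u. \<forall>is. length is \<noteq> k \<longrightarrow> u is = 0}"

definition tprod :: "nat \<Rightarrow> (nat \<Rightarrow> complex^'n) \<Rightarrow> ('n::finite) tensor" where
  "tprod k f = (\<lambda>is. if length is = k then (\<Prod>j<k. f j $ (is ! j)) else 0)"

text \<open>Action of a permutation sigma of {0..<k}:
  sigma(f_0 \<otimes> ... \<otimes> f_(k-1)) = f_sigma(0) \<otimes> ... \<otimes> f_sigma(k-1).\<close>
definition tperm :: "(nat \<Rightarrow> nat) \<Rightarrow> ('n::finite) tensor \<Rightarrow> 'n tensor" where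
  "tperm \<sigma> u = (\<lambda>is. u (permute_list (inv \<sigma>) is))"

definition sym_tens :: "nat \<Rightarrow> ('n::finite) tensor set" where
  "sym_tens k = {u \<in> tens k. \<forall>\<sigma>. \<sigma> permutes {..<k} \<longrightarrow> tperm \<sigma> u = u}"

definition asym_tens :: "nat \<Rightarrow> ('n::finite) tensor set" where
  "asym_tens k = {u \<in> tens k. \<forall>\<sigma>. \<sigma> permutes {..<k} \<longrightarrow>
      tperm \<sigma> u = (\<lambda>is. of_int (sign \<sigma>) * u is)}"

definition wedge :: "nat \<Rightarrow> (nat \<Rightarrow> complex^'n) \<Rightarrow> ('n::finite) tensor" where
  "wedge k f = (\<lambda>is. (1 / of_nat (fact k)) *
      (\<Sum>\<sigma>\<in>{\<sigma>. \<sigma> permutes {..<k}}. of_int (sign \<sigma>) * tprod k (f \<circ> \<sigma>) is))"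

definition tpow :: "nat \<Rightarrow> complex^'n \<Rightarrow> ('n::finite) tensor" where
  "tpow k x = tprod k (\<lambda>_. x)"

text \<open>Contraction i_nu u for u in the k-fold and nu in the (k-1)-fold tensor power,
  linear extension of i_(g_1..g_(k-1)) (f_1..f_k) = prod <f_i|g_i> f_k,
  with <f|g> = sum_i f_i * conj(g_i).\<close>
definition contr :: "nat \<Rightarrow> ('n::finite) tensor \<Rightarrow> 'n tensor \<Rightarrow> complex^'n" where
  "contr k \<nu> u = (\<chi> j. \<Sum>is\<in>idx (k - 1). u (is @ [j]) * cnj (\<nu> is))"

definition srank :: "nat \<Rightarrow> ('n::finite) tensor \<Rightarrow> nat" where
  "srank k u = Max ((\<lambda>\<sigma>. vec.dim {contr k \<nu> (tperm \<sigma> u) | \<nu>. \<nu> \<in> tens (k - 1)})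
                     ` {\<sigma>. \<sigma> permutes {..<k}})"

definition simple_sym :: "nat \<Rightarrow> ('n::finite) tensor \<Rightarrow> bool" where
  "simple_sym k u \<longleftrightarrow> u \<in> sym_tens k \<and> u \<noteq> (\<lambda>_. 0) \<and>
     (\<forall>v :: 'n tensor \<in> sym_tens k. v \<noteq> (\<lambda>_. 0) \<longrightarrow> srank k u \<le> srank k v)"

definition simple_asym :: "nat \<Rightarrow> ('n::finite) tensor \<Rightarrow> bool" where
  "simple_asym k u \<longleftrightarrow> u \<in> asym_tens k \<and> u \<noteq> (\<lambda>_. 0) \<and>
     (\<forall>v :: 'n tensor \<in> asym_tens k. v \<noteq> (\<lambda>_. 0) \<longrightarrow> srank k u \<le> srank k v)"

definition tnorm2 :: "nat \<Rightarrow> ('n::finite) tensor \<Rightarrow> real" where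
  "tnorm2 k x = (\<Sum>is\<in>idx k. (cmod (x is))\<^sup>2)"

definition pstate :: "nat \<Rightarrow> ('n::finite) tensor \<Rightarrow> 'n tmatrix" where
  "pstate k x = (\<lambda>is js. x is * cnj (x js) / complex_of_real (tnorm2 k x))"

definition bos_pure :: "nat \<Rightarrow> ('n::finite) tmatrix \<Rightarrow> bool" where
  "bos_pure k \<rho> \<longleftrightarrow> (\<exists>x \<in> sym_tens k. x \<noteq> (\<lambda>_. 0) \<and> \<rho> = pstate k x)"

definition ferm_pure :: "nat \<Rightarrow> ('n::finite) tmatrix \<Rightarrow> bool" where
  "ferm_pure k \<rho> \<longleftrightarrow> (\<exists>x \<in> asym_tens k. x \<noteq> (\<lambda>_. 0) \<and> \<rho> = pstate k x)"

definition simple_bos_pure :: "nat \<Rightarrow> ('n::finite) tmatrix \<Rightarrow> bool" where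
  "simple_bos_pure k \<rho> \<longleftrightarrow> (\<exists>x. simple_sym k x \<and> \<rho> = pstate k x)"

definition simple_ferm_pure :: "nat \<Rightarrow> ('n::finite) tmatrix \<Rightarrow> bool" where
  "simple_ferm_pure k \<rho> \<longleftrightarrow> (\<exists>x. simple_asym k x \<and> \<rho> = pstate k x)"

definition seg_sym_range :: "nat \<Rightarrow> ('n::finite) tmatrix set" where
  "seg_sym_range k = {pstate k (tpow k x) | x. x \<noteq> 0}"

definition seg_asym_range :: "nat \<Rightarrow> ('n::finite) tmatrix set" where
  "seg_asym_range k = {pstate k (wedge k xs) | xs. wedge k xs \<noteq> (\<lambda>_. 0)}"

definition cconv :: "('n::finite) tmatrix set \<Rightarrow> 'n tmatrix set" where
  "cconv S = {\<rho>. \<exists>m (p :: nat \<Rightarrow> real) \<tau>. (\<forall>i<m. 0 \<le> p i \<and> \<tau> i \<in> S) \<and>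
       (\<Sum>i<m. p i) = 1 \<and> \<rho> = (\<lambda>is js. \<Sum>i<m. complex_of_real (p i) * \<tau> i is js)}"

definition dens :: "nat \<Rightarrow> ('n::finite) tmatrix \<Rightarrow> bool" where
  "dens k \<rho> \<longleftrightarrow> (\<forall>is js. (length is \<noteq> k \<or> length js \<noteq> k) \<longrightarrow> \<rho> is js = 0) \<and>
     (\<forall>v. let q = (\<Sum>is\<in>idx k. \<Sum>js\<in>idx k. cnj (v is) * \<rho> is js * v js)
          in Im q = 0 \<and> Re q \<ge> 0) \<and>
     (\<Sum>is\<in>idx k. \<rho> is is) = 1"

definition apply_op :: "nat \<Rightarrow> ('n::finite) tmatrix \<Rightarrow> 'n tensor \<Rightarrow> 'n tensor" where
  "apply_op k \<rho> v = (\<lambda>is. \<Sum>js\<in>idx k. \<rho> is js * v js)"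

definition bos_mixed :: "nat \<Rightarrow> ('n::finite) tmatrix \<Rightarrow> bool" where
  "bos_mixed k \<rho> \<longleftrightarrow> dens k \<rho> \<and> (\<forall>v. apply_op k \<rho> v \<in> sym_tens k)"

definition ferm_mixed :: "nat \<Rightarrow> ('n::finite) tmatrix \<Rightarrow> bool" where
  "ferm_mixed k \<rho> \<longleftrightarrow> dens k \<rho> \<and> (\<forall>v. apply_op k \<rho> v \<in> asym_tens k)"

definition simple_bos_mixed :: "nat \<Rightarrow> ('n::finite) tmatrix \<Rightarrow> bool" where
  "simple_bos_mixed k \<rho> \<longleftrightarrow> \<rho> \<in> cconv {\<sigma>. simple_bos_pure k \<sigma>}"

definition simple_ferm_mixed :: "nat \<Rightarrow> ('n::finite) tmatrix \<Rightarrow> bool" where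
  "simple_ferm_mixed k \<rho> \<longleftrightarrow> \<rho> \<in> cconv {\<sigma>. simple_ferm_pure k \<sigma>}"

end

theory Submission
  imports Defs
begin

text \<open>
  For a tensor u of order k let W(u) = contr_space k u be the space of all
  contractions i_nu u; it is spanned by the last-slot slices of u.  Since the identity is among
  the permutations maximised over, srank u \<ge> dim W(u).

  Upper bounds: every slice of x^k is a multiple of x, and every slice of
  f_0 \<wedge> ... \<wedge> f_(k-1) lies in the span of the f_i; hence srank x^k \<le> 1 and
  srank (f_0 \<wedge> ... \<wedge> f_(k-1)) \<le> k.

  Lower bounds and rigidity: a nonzero tensor has dim W \<ge> 1; if x is antisymmetric with
  x(l0) \<noteq> 0, the k slices of x through l0 form a family that is diagonal with respect to the
  entries of l0, so dim W(x) \<ge> k.  When these bounds are attained, W(x) is spanned by the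
  family, and a vanishing lemma (a tensor whose one-slot fibres all lie in the span of a
  diagonal family and which vanishes on the diagonal coordinates is zero) shows that x is a
  multiple of t^k (symmetric case, family of size one) or of the wedge of the family.

  Hence the simple symmetric tensors are exactly the nonzero multiples of the x^k, and the
  simple antisymmetric ones the nonzero multiples of nonzero wedges.  As rho_x is invariant
  under scaling, the simple pure states are exactly the ranges of Seg; the mixed statement
  then compares convex hulls of equal sets.
\<close>

lemma finite_idx [simp]: "finite (idx k :: ('n::finite) list set)"
proof -
  have "idx k = {xs :: 'n list. set xs \<subseteq> UNIV \<and> length xs = k}" by (auto simp: idx_def)
  then show ?thesis using finite_lists_length_eq[of "UNIV::'n set" k] by simp
qed

subsection \<open>Slices, fibres and the contraction space\<close>

definition slice :: "('n::finite) tensor \<Rightarrow> 'n list \<Rightarrow> complex^'n" where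
  "slice u is = (\<chi> j. u (is @ [j]))"

definition fiber :: "('n::finite) tensor \<Rightarrow> 'n list \<Rightarrow> nat \<Rightarrow> complex^'n" where
  "fiber u l p = (\<chi> j. u (l[p:=j]))"

definition contr_space :: "nat \<Rightarrow> ('n::finite) tensor \<Rightarrow> (complex^'n) set" where
  "contr_space k u = {contr k \<nu> u | \<nu>. \<nu> \<in> tens (k - 1)}"

lemma contr_as_slice_sum: "contr k \<nu> u = (\<Sum>is\<in>idx (k-1). cnj (\<nu> is) *s slice u is)"
  unfolding contr_def slice_def vec_eq_iff by (simp add: sum_component mult_ac)

text \<open>Contracting with a basis tensor picks out a single slice.\<close>
lemma slice_in_contr_space:
  assumes "length is = k - 1"
  shows "slice u is \<in> contr_space k u"
proof -
  let ?nu = "\<lambda>l. if l = is then 1 else (0::complex)"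
  have nu: "?nu \<in> tens (k-1)" using assms by (auto simp: tens_def)
  have "is \<in> idx (k-1)" using assms by (simp add: idx_def)
  have "contr k ?nu u = (\<Sum>l\<in>idx (k-1). (if l = is then slice u is else 0))"
    unfolding contr_as_slice_sum by (rule sum.cong) auto
  also have "\<dots> = slice u is" using \<open>is \<in> idx (k-1)\<close> by simp
  finally have "contr k ?nu u = slice u is" .
  then show ?thesis unfolding contr_space_def using nu by (auto intro!: exI[of _ ?nu])
qed

lemma contr_space_subset_span:
  assumes "\<And>is. length is = k - 1 \<Longrightarrow> slice u is \<in> vec.span S"
  shows "contr_space k u \<subseteq> vec.span S"
  using assms unfolding contr_space_def contr_as_slice_sum idx_def
  by (auto intro!: vec.span_sum vec.span_scale)

lemma dim_contr_space_le:
  assumes "\<And>is. length is = k - 1 \<Longrightarrow> slice u is \<in> vec.span S" "finite S"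
  shows "vec.dim (contr_space k u) \<le> card S"
  using vec.dim_le_card[OF contr_space_subset_span[OF assms(1)] assms(2)] .

lemma tperm_id: "tperm id u = u"
  by (simp add: tperm_def permute_list_def map_nth)

text \<open>The identity permutation shows that srank dominates dim W(u).\<close>
lemma dim_contr_space_le_srank: "vec.dim (contr_space k u) \<le> srank k u"
proof -
  let ?d = "\<lambda>\<sigma>. vec.dim {contr k \<nu> (tperm \<sigma> u) | \<nu>. \<nu> \<in> tens (k - 1)}"
  have "?d id \<in> ?d ` {\<sigma>. \<sigma> permutes {..<k}}" using permutes_id by blast
  then have "?d id \<le> srank k u"
    unfolding srank_def by (intro Max_ge) (simp_all add: finite_permutations)
  then show ?thesis by (simp add: tperm_id contr_space_def)
qed

lemma srank_le:
  assumes "\<And>\<sigma>. \<sigma> permutes {..<k} \<Longrightarrow> vec.dim (contr_space k (tperm \<sigma> u)) \<le> b"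
  shows "srank k u \<le> b"
  unfolding srank_def using assms
  by (subst Max_le_iff) (auto simp: finite_permutations contr_space_def intro: permutes_id)

lemma nonzero_entry:
  assumes "u \<in> tens k" "u \<noteq> (\<lambda>_. 0)"
  obtains l where "length l = k" "u l \<noteq> 0"
  using assms by (auto simp: tens_def fun_eq_iff)

lemma slice_butlast_last:
  assumes "l \<noteq> []"
  shows "slice u (butlast l) $ last l = u l"
  using assms by (simp add: slice_def)

text \<open>A nonzero tensor has a nonzero slice, hence a nonzero contraction space.\<close>
lemma dim_contr_space_pos:
  assumes "u \<in> tens (Suc m)" "u \<noteq> (\<lambda>_. 0)"
  shows "1 \<le> vec.dim (contr_space (Suc m) u)"
proof -
  obtain l where l: "length l = Suc m" "u l \<noteq> 0" using nonzero_entry[OF assms] .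
  let ?t = "slice u (butlast l)"
  have "?t \<in> contr_space (Suc m) u" by (rule slice_in_contr_space) (use l in simp)
  moreover have "?t \<noteq> 0" using slice_butlast_last[of l u] l by (cases l) auto
  ultimately have "card {?t} \<le> vec.dim (contr_space (Suc m) u)"
    by (intro vec.independent_card_le_dim) auto
  then show ?thesis by simp
qed

lemma tprod_permute:
  assumes "\<sigma> permutes {..<k}"
  shows "tprod k g (permute_list (inv \<sigma>) is) = tprod k (g \<circ> \<sigma>) is"
proof (cases "length is = k")
  case True
  have inv_perm: "inv \<sigma> permutes {..<length is}" using permutes_inv[OF assms] True by simp
  have "(\<Prod>j<k. g j $ (permute_list (inv \<sigma>) is ! j)) = (\<Prod>j<k. g j $ (is ! inv \<sigma> j))"
    using True by (intro prod.cong) (auto simp: permute_list_nth[OF inv_perm])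
  also have "\<dots> = (\<Prod>j<k. (\<lambda>j. g (\<sigma> j) $ (is ! j)) (inv \<sigma> j))"
    by (intro prod.cong) (auto simp: permutes_inverses[OF assms])
  also have "\<dots> = (\<Prod>j<k. g (\<sigma> j) $ (is ! j))"
    using prod.permute[OF permutes_inv[OF assms], of "\<lambda>j. g (\<sigma> j) $ (is ! j)"] by (simp add: o_def)
  finally show ?thesis using True by (simp add: tprod_def)
qed (simp add: tprod_def)

lemma tpow_sym: "tpow k x \<in> sym_tens k"
  unfolding sym_tens_def tens_def
proof safe
  show "length is \<noteq> k \<Longrightarrow> tpow k x is = 0" for "is" by (simp add: tpow_def tprod_def)
  fix \<sigma> :: "nat \<Rightarrow> nat" assume "\<sigma> permutes {..<k}"
  then show "tperm \<sigma> (tpow k x) = tpow k x"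
    unfolding tperm_def tpow_def fun_eq_iff using tprod_permute[of \<sigma> k "\<lambda>_. x"] by (simp add: o_def)
qed

lemma tpow_nonzero:
  assumes "x \<noteq> 0"
  shows "tpow k x \<noteq> (\<lambda>_. 0)"
proof -
  obtain a where "x $ a \<noteq> 0" using assms by (auto simp: vec_eq_iff)
  moreover have "tpow k x (replicate k a) = (x $ a) ^ k" by (simp add: tpow_def tprod_def)
  ultimately show ?thesis by (metis power_not_zero)
qed

lemma sign_squared: "of_int (sign \<tau>) * of_int (sign \<tau>) = (1::complex)"
  by (metis of_int_1 of_int_mult sign_idempotent)

text \<open>Reindexing the defining sum of the wedge by sigma \<mapsto> sigma \<circ> tau shows antisymmetry.\<close>
lemma wedge_asym: "wedge k s \<in> asym_tens k"
  unfolding asym_tens_def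
proof safe
  show "wedge k s \<in> tens k" by (simp add: tens_def wedge_def tprod_def)
  fix \<tau> :: "nat \<Rightarrow> nat" assume t: "\<tau> permutes {..<k}"
  have pt: "permutation \<tau>" using permutes_imp_permutation[OF _ t] by simp
  let ?P = "{\<sigma>. \<sigma> permutes {..<k}}"
  show "tperm \<tau> (wedge k s) = (\<lambda>is. of_int (sign \<tau>) * wedge k s is)"
  proof
    fix "is" :: "'a list"
    have "(\<Sum>\<sigma>\<in>?P. of_int (sign \<sigma>) * tprod k (s \<circ> \<sigma>) is)
        = (\<Sum>\<sigma>\<in>?P. of_int (sign (\<sigma> \<circ> \<tau>)) * tprod k (s \<circ> (\<sigma> \<circ> \<tau>)) is)"
      by (rule sum_permutations_compose_right[OF t])
    also have "\<dots> = of_int (sign \<tau>) * (\<Sum>\<sigma>\<in>?P. of_int (sign \<sigma>) * tprod k (s \<circ> \<sigma> \<circ> \<tau>) is)"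
      unfolding sum_distrib_left
    proof (intro sum.cong refl)
      fix \<sigma> assume "\<sigma> \<in> ?P"
      then have "permutation \<sigma>" using permutes_imp_permutation[of "{..<k}" \<sigma>] by simp
      then show "of_int (sign (\<sigma> \<circ> \<tau>)) * tprod k (s \<circ> (\<sigma> \<circ> \<tau>)) is
          = of_int (sign \<tau>) * (of_int (sign \<sigma>) * tprod k (s \<circ> \<sigma> \<circ> \<tau>) is)"
        using pt by (simp add: sign_compose o_assoc)
    qed
    finally have reindex: "(\<Sum>\<sigma>\<in>?P. of_int (sign \<sigma>) * tprod k (s \<circ> \<sigma>) is)
        = of_int (sign \<tau>) * (\<Sum>\<sigma>\<in>?P. of_int (sign \<sigma>) * tprod k (s \<circ> \<sigma> \<circ> \<tau>) is)" .
    have "tperm \<tau> (wedge k s) is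
        = (1 / of_nat (fact k)) * (\<Sum>\<sigma>\<in>?P. of_int (sign \<sigma>) * tprod k (s \<circ> \<sigma> \<circ> \<tau>) is)"
      unfolding tperm_def wedge_def
      by (intro arg_cong2[where f="(*)"] sum.cong refl) (simp add: tprod_permute[OF t])
    also have "\<dots> = of_int (sign \<tau>) * wedge k s is"
      unfolding wedge_def reindex using sign_squared[of \<tau>] by (simp add: algebra_simps)
    finally show "tperm \<tau> (wedge k s) is = of_int (sign \<tau>) * wedge k s is" .
  qed
qed

subsection \<open>Fibres of (anti)symmetric tensors are slices\<close>

text \<open>The transposition of slots p and m moves slot p to the last position.\<close>
lemma transpose_permutes_upto:
  assumes "p \<le> m"
  shows "Transposition.transpose p m permutes {..<Suc m}"
  using assms by (intro permutes_swap_id) auto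

lemma permute_list_transpose_involutive:
  assumes "length l = Suc m" "p \<le> m"
  shows "permute_list (Transposition.transpose p m) (permute_list (Transposition.transpose p m) l) = l"
proof -
  let ?t = "Transposition.transpose p m"
  have P: "?t permutes {..<length l}" using assms transpose_permutes_upto[of p m] by simp
  then have P': "?t permutes {..<length (permute_list ?t l)}" by simp
  show ?thesis
  proof (rule nth_equalityI)
    fix i assume "i < length (permute_list ?t (permute_list ?t l))"
    then have i: "i < length l" by simp
    then have "?t i < length l" using permutes_in_image[OF P] by simp
    then show "permute_list ?t (permute_list ?t l) ! i = l ! i"
      using i by (simp add: permute_list_nth[OF P] permute_list_nth[OF P'])
  qed simp
qed

lemma permute_list_transpose_update:
  assumes "length l = Suc m" "p \<le> m"
  shows "permute_list (Transposition.transpose p m) (l[p:=j])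
           = butlast (permute_list (Transposition.transpose p m) l) @ [j]"
proof -
  let ?t = "Transposition.transpose p m"
  have P: "?t permutes {..<length l}" using assms transpose_permutes_upto[of p m] by simp
  have P': "?t permutes {..<length (l[p:=j])}" using P by simp
  show ?thesis
  proof (rule nth_equalityI)
    fix i assume "i < length (permute_list ?t (l[p := j]))"
    then have i: "i < Suc m" using assms by simp
    show "permute_list ?t (l[p := j]) ! i = (butlast (permute_list ?t l) @ [j]) ! i"
    proof (cases "i = m")
      case False
      then have "?t i \<noteq> p" by (auto simp: Transposition.transpose_def)
      then show ?thesis using assms i False
        by (auto simp: permute_list_nth[OF P'] permute_list_nth[OF P] nth_append nth_butlast)
    qed (use assms in \<open>simp add: permute_list_nth[OF P'] nth_append\<close>)
  qed (use assms in simp)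
qed

lemma fiber_eq_slice:
  assumes "length l = Suc m" "p \<le> m"
    and swap: "tperm (Transposition.transpose p m) u = (\<lambda>is. e * u is)"
  shows "fiber u l p = e *s slice u (butlast (permute_list (Transposition.transpose p m) l))"
proof -
  let ?t = "Transposition.transpose p m"
  have "u (l[p:=j]) = e * u (butlast (permute_list ?t l) @ [j])" for j
  proof -
    have "u (l[p:=j]) = tperm ?t u (permute_list ?t (l[p:=j]))"
      unfolding tperm_def using permute_list_transpose_involutive[of "l[p:=j]" m p] assms by simp
    also have "\<dots> = e * u (permute_list ?t (l[p:=j]))" using fun_cong[OF swap] by blast
    finally show ?thesis using permute_list_transpose_update[OF assms(1,2)] by simp
  qed
  then show ?thesis by (simp add: vec_eq_iff slice_def fiber_def)
qed

lemma fiber_in_span: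
  assumes "length l = Suc m" "p \<le> m"
    and "tperm (Transposition.transpose p m) u = (\<lambda>is. e * u is)"
    and "\<And>is. length is = m \<Longrightarrow> slice u is \<in> vec.span S"
  shows "fiber u l p \<in> vec.span S"
  unfolding fiber_eq_slice[OF assms(1-3)] using assms(1,4) by (intro vec.span_scale) simp

lemma sym_swap:
  assumes "u \<in> sym_tens (Suc m)" "p \<le> m"
  shows "tperm (Transposition.transpose p m) u = (\<lambda>is. 1 * u is)"
  using assms transpose_permutes_upto[of p m] by (auto simp: sym_tens_def)

lemma asym_swap:
  assumes "u \<in> asym_tens (Suc m)" "p \<le> m"
  shows "tperm (Transposition.transpose p m) u
           = (\<lambda>is. of_int (sign (Transposition.transpose p m)) * u is)"
  using assms transpose_permutes_upto[of p m] by (auto simp: asym_tens_def)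

subsection \<open>Upper bounds: srank of x^k and of wedges\<close>

lemma slice_tprod:
  fixes g :: "nat \<Rightarrow> complex^'n::finite"
  assumes "length is = m"
  shows "slice (tprod (Suc m) g) is = (\<Prod>p<m. g p $ (is!p)) *s g m"
proof -
  have "(\<Prod>p<Suc m. g p $ ((is @ [j]) ! p)) = (\<Prod>p<m. g p $ (is ! p)) * g m $ j" for j
  proof -
    have "(\<Prod>p<Suc m. g p $ ((is @ [j]) ! p)) = (\<Prod>p<m. g p $ ((is @ [j]) ! p)) * g m $ j"
      using assms by (simp add: nth_append)
    also have "(\<Prod>p<m. g p $ ((is @ [j]) ! p)) = (\<Prod>p<m. g p $ (is ! p))"
      using assms by (intro prod.cong) (auto simp: nth_append)
    finally show ?thesis .
  qed
  then show ?thesis using assms by (simp add: slice_def tprod_def vec_eq_iff)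
qed

lemma slice_scale: "slice (\<lambda>is. e * u is) is = e *s slice u is"
  by (simp add: slice_def vec_eq_iff)

lemma slice_tpow_in_span:
  assumes "length is = m"
  shows "slice (tpow (Suc m) x) is \<in> vec.span {x}"
  unfolding tpow_def slice_tprod[OF assms] by (rule vec.span_scale) (simp add: vec.span_base)

lemma slice_wedge_in_span:
  assumes "length is = m"
  shows "slice (wedge (Suc m) s) is \<in> vec.span (s ` {..<Suc m})"
proof -
  have "slice (wedge (Suc m) s) is = (1 / of_nat (fact (Suc m))) *s
      (\<Sum>\<sigma>\<in>{\<sigma>. \<sigma> permutes {..<Suc m}}. of_int (sign \<sigma>) *s slice (tprod (Suc m) (s \<circ> \<sigma>)) is)"
    by (simp add: slice_def wedge_def vec_eq_iff sum_component)
  also have "\<dots> \<in> vec.span (s ` {..<Suc m})"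
  proof (intro vec.span_scale vec.span_sum)
    fix \<sigma> assume "\<sigma> \<in> {\<sigma>. \<sigma> permutes {..<Suc m}}"
    then have "\<sigma> m < Suc m" using permutes_in_image[of \<sigma> "{..<Suc m}" m] by auto
    then show "slice (tprod (Suc m) (s \<circ> \<sigma>)) is \<in> vec.span (s ` {..<Suc m})"
      unfolding slice_tprod[OF assms] by (intro vec.span_scale vec.span_base) auto
  qed
  finally show ?thesis .
qed

lemma srank_tpow_le: "srank (Suc m) (tpow (Suc m) x) \<le> 1"
proof (rule srank_le)
  fix \<sigma> assume "\<sigma> permutes {..<Suc m}"
  then have "tperm \<sigma> (tpow (Suc m) x) = tpow (Suc m) x" using tpow_sym by (auto simp: sym_tens_def)
  moreover have "vec.dim (contr_space (Suc m) (tpow (Suc m) x)) \<le> card {x}"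
    by (rule dim_contr_space_le) (auto intro: slice_tpow_in_span)
  ultimately show "vec.dim (contr_space (Suc m) (tperm \<sigma> (tpow (Suc m) x))) \<le> 1" by simp
qed

lemma srank_wedge_le: "srank (Suc m) (wedge (Suc m) s) \<le> Suc m"
proof (rule srank_le)
  fix \<sigma> assume "\<sigma> permutes {..<Suc m}"
  then have e: "tperm \<sigma> (wedge (Suc m) s) = (\<lambda>is. of_int (sign \<sigma>) * wedge (Suc m) s is)"
    using wedge_asym by (auto simp: asym_tens_def)
  have "vec.dim (contr_space (Suc m) (tperm \<sigma> (wedge (Suc m) s))) \<le> card (s ` {..<Suc m})"
    unfolding e
    by (rule dim_contr_space_le) (auto simp: slice_scale intro!: vec.span_scale slice_wedge_in_span)
  also have "\<dots> \<le> Suc m" using card_image_le[of "{..<Suc m}" s] by simp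
  finally show "vec.dim (contr_space (Suc m) (tperm \<sigma> (wedge (Suc m) s))) \<le> Suc m" .
qed

lemma permute_list_transpose_equal_entries:
  assumes "length l = k" "a < k" "b < k" "l ! a = l ! b"
  shows "permute_list (Transposition.transpose a b) l = l"
proof -
  have P: "Transposition.transpose a b permutes {..<length l}"
    using assms by (intro permutes_swap_id) auto
  show ?thesis
    by (rule nth_equalityI)
       (use assms in \<open>auto simp: permute_list_nth[OF P] Transposition.transpose_def\<close>)
qed

lemma asym_repeated_index:
  assumes u: "u \<in> asym_tens k"
    and l: "length l = k" "a < k" "b < k" "a \<noteq> b" "l ! a = l ! b"
  shows "u l = 0"
proof -
  let ?t = "Transposition.transpose a b"
  have "?t permutes {..<k}" using l by (intro permutes_swap_id) auto
  then have "tperm ?t u l = of_int (sign ?t) * u l" using u by (auto simp: asym_tens_def)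
  moreover have "tperm ?t u l = u l"
    unfolding tperm_def using permute_list_transpose_equal_entries[OF l(1,2,3,5)] by simp
  ultimately have "u l = - u l" using l by (simp add: sign_swap_id)
  then show ?thesis by simp
qed

lemma asym_permute_list:
  assumes u: "u \<in> asym_tens k" and p: "p permutes {..<k}"
  shows "u (permute_list p l) = of_int (sign p) * u l"
proof -
  have "tperm (inv p) u l = of_int (sign (inv p)) * u l"
    using u permutes_inv[OF p] by (auto simp: asym_tens_def)
  moreover have "sign (inv p) = sign p"
    using p by (intro sign_inverse) (auto intro: permutes_imp_permutation)
  ultimately show ?thesis using p by (simp add: tperm_def permutes_inv_inv)
qed

lemma asym_nonzero_distinct:
  assumes "u \<in> asym_tens k" "length l = k" "u l \<noteq> 0"
  shows "distinct l"
  using asym_repeated_index[OF assms(1,2)] assms(2,3) by (auto simp: distinct_conv_nth)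

text \<open>Two antisymmetric tensors proportional at a multi-index l0 with distinct entries are
  proportional at every multi-index whose entries are taken from l0: such an index either
  repeats an entry (both vanish) or is a permutation of l0 (both change by the same sign).\<close>
lemma asym_proportional_on_entries:
  assumes x: "x \<in> asym_tens k" and w: "w \<in> asym_tens k"
    and l0: "length l0 = k" "distinct l0" "x l0 = c * w l0"
    and l: "length l = k" "set l \<subseteq> set l0"
  shows "x l = c * w l"
proof (cases "distinct l")
  case True
  have "card (set l) = card (set l0)" using True l0 l by (simp add: distinct_card)
  then have "set l = set l0" using l(2) by (intro card_subset_eq) auto
  then have "mset l = mset l0" using True l0(2) set_eq_iff_mset_eq_distinct by blast
  then obtain p where p: "p permutes {..<k}" "permute_list p l0 = l"
    using mset_eq_permutation[of l l0] l0(1) by metis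
  show ?thesis
    using l0(3) by (simp add: p(2)[symmetric] asym_permute_list[OF x p(1)] asym_permute_list[OF w p(1)])
next
  case False
  then obtain a b where ab: "a < k" "b < k" "a \<noteq> b" "l ! a = l ! b"
    using l by (auto simp: distinct_conv_nth)
  show ?thesis using asym_repeated_index[OF x l(1) ab] asym_repeated_index[OF w l(1) ab] by simp
qed

subsection \<open>Diagonal families and the vanishing lemma\<close>

definition diagonal :: "nat \<Rightarrow> (nat \<Rightarrow> complex^'n) \<Rightarrow> (nat \<Rightarrow> 'n) \<Rightarrow> bool" where
  "diagonal n s i \<longleftrightarrow> (\<forall>q<n. s q $ i q \<noteq> 0) \<and> (\<forall>q<n. \<forall>q'<n. q \<noteq> q' \<longrightarrow> s q $ i q' = 0)"

lemma diagonal_eval: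
  fixes s :: "nat \<Rightarrow> complex^'n::finite"
  assumes "diagonal n s i" "q' < n"
  shows "(\<Sum>q<n. a q *s s q) $ i q' = a q' * s q' $ i q'"
proof -
  have "(\<Sum>q<n. a q *s s q) $ i q' = (\<Sum>q<n. if q = q' then a q * s q $ i q else 0)"
    unfolding sum_component
    by (rule sum.cong) (use assms in \<open>auto simp: diagonal_def\<close>)
  also have "\<dots> = a q' * s q' $ i q'" using assms(2) by simp
  finally show ?thesis .
qed

lemma diagonal_inj:
  assumes "diagonal n s i"
  shows "inj_on s {..<n}"
  using assms unfolding diagonal_def inj_on_def by (metis lessThan_iff)

lemma diagonal_span_zero:
  fixes s :: "nat \<Rightarrow> complex^'n::finite"
  assumes D: "diagonal n s i" and v: "v \<in> vec.span (s ` {..<n})"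
    and zero: "\<And>q. q < n \<Longrightarrow> v $ i q = 0"
  shows "v = 0"
proof -
  obtain c where "v = (\<Sum>w\<in>s ` {..<n}. c w *s w)"
    using v vec.span_finite[of "s ` {..<n}"] by auto
  then have v_sum: "v = (\<Sum>q<n. c (s q) *s s q)"
    by (simp add: sum.reindex[OF diagonal_inj[OF D]])
  have "c (s q) = 0" if "q < n" for q
    using zero[OF that] diagonal_eval[OF D that, of "\<lambda>q. c (s q)"] D that
    by (simp add: v_sum diagonal_def)
  then show ?thesis by (simp add: v_sum)
qed

lemma diagonal_independent:
  fixes s :: "nat \<Rightarrow> complex^'n::finite"
  assumes D: "diagonal n s i"
  shows "vec.independent (s ` {..<n})" "card (s ` {..<n}) = n"
proof -
  show "card (s ` {..<n}) = n" by (simp add: card_image[OF diagonal_inj[OF D]])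
  show "vec.independent (s ` {..<n})" unfolding vec.independent_explicit
  proof (intro conjI allI impI ballI)
    fix c w assume z: "(\<Sum>v\<in>s ` {..<n}. c v *s v) = 0" and w: "w \<in> s ` {..<n}"
    then obtain q where q: "q < n" "w = s q" by auto
    have "(\<Sum>q<n. c (s q) *s s q) = 0" using z by (simp add: sum.reindex[OF diagonal_inj[OF D]])
    then show "c w = 0" using diagonal_eval[OF D q(1), of "\<lambda>q. c (s q)"] D q
      by (simp add: diagonal_def)
  qed simp
qed

text \<open>If every one-slot fibre of y lies in the span of a diagonal family and
  y vanishes on all multi-indices built from the coordinates i_q, then y = 0.  Induction on
  the number of slots of l holding a foreign coordinate: replacing such an entry by any i_q
  decreases that number, so the fibre through that slot vanishes at every i_q, hence is 0.\<close>
lemma diagonal_fibers_vanish: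
  fixes y :: "('n::finite) tensor" and s :: "nat \<Rightarrow> complex^'n"
  assumes y: "y \<in> tens (Suc m)" and D: "diagonal n s i"
    and fibers: "\<And>l p. length l = Suc m \<Longrightarrow> p \<le> m \<Longrightarrow> fiber y l p \<in> vec.span (s ` {..<n})"
    and base: "\<And>l. length l = Suc m \<Longrightarrow> set l \<subseteq> i ` {..<n} \<Longrightarrow> y l = 0"
  shows "y = (\<lambda>_. 0)"
proof -
  let ?B = "\<lambda>l. {p. p \<le> m \<and> l ! p \<notin> i ` {..<n}}"
  have "y l = 0" if "length l = Suc m" for l
    using that
  proof (induction "card (?B l)" arbitrary: l rule: less_induct)
    case (less l)
    show "y l = 0"
    proof (cases "?B l = {}")
      case True
      then have "set l \<subseteq> i ` {..<n}" using less.prems by (auto simp: in_set_conv_nth less_Suc_eq_le)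
      then show ?thesis using base less.prems by blast
    next
      case False
      then obtain p where p: "p \<le> m" "l ! p \<notin> i ` {..<n}" by auto
      have "fiber y l p $ i q = 0" if "q < n" for q
      proof -
        have fin: "finite (?B l)" by (rule finite_subset[of _ "{..m}"]) auto
        have "?B (l[p := i q]) \<subseteq> ?B l - {p}"
          using that less.prems p by (auto simp: nth_list_update split: if_splits)
        moreover have "card (?B l - {p}) < card (?B l)"
          using p fin by (intro psubset_card_mono) auto
        ultimately have "card (?B (l[p := i q])) < card (?B l)"
          using fin by (meson card_mono finite_Diff le_less_trans)
        then show ?thesis using less.hyps less.prems by (simp add: fiber_def)
      qed
      then have "fiber y l p = 0"
        using diagonal_span_zero[OF D fibers[OF less.prems p(1)]] by blast
      then have "fiber y l p $ (l ! p) = 0" by simp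
      then show ?thesis by (simp add: fiber_def)
    qed
  qed
  then show ?thesis using y by (auto simp: tens_def)
qed

lemma diagonal_fibers_proportional:
  fixes x w :: "('n::finite) tensor"
  assumes "x \<in> tens (Suc m)" "w \<in> tens (Suc m)" and D: "diagonal n s i"
    and fx: "\<And>l p. length l = Suc m \<Longrightarrow> p \<le> m \<Longrightarrow> fiber x l p \<in> vec.span (s ` {..<n})"
    and fw: "\<And>l p. length l = Suc m \<Longrightarrow> p \<le> m \<Longrightarrow> fiber w l p \<in> vec.span (s ` {..<n})"
    and base: "\<And>l. length l = Suc m \<Longrightarrow> set l \<subseteq> i ` {..<n} \<Longrightarrow> x l = c * w l"
  shows "x = (\<lambda>is. c * w is)"
proof -
  let ?y = "\<lambda>is. x is - c * w is"
  have "?y = (\<lambda>_. 0)"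
  proof (rule diagonal_fibers_vanish[OF _ D])
    show "?y \<in> tens (Suc m)" using assms(1,2) by (simp add: tens_def)
    fix l :: "'n list" and p assume "length l = Suc m" "p \<le> m"
    moreover have "fiber ?y l p = fiber x l p - c *s fiber w l p"
      by (simp add: fiber_def vec_eq_iff)
    ultimately show "fiber ?y l p \<in> vec.span (s ` {..<n})"
      using fx fw by (simp add: vec.span_diff vec.span_scale)
  qed (use base in simp)
  then show ?thesis by (simp add: fun_eq_iff)
qed

subsection \<open>Symmetric tensors with a one-dimensional contraction space\<close>

lemma sym_structure:
  assumes x: "x \<in> sym_tens (Suc m)" "x \<noteq> (\<lambda>_. 0)"
    and dim: "vec.dim (contr_space (Suc m) x) \<le> 1"
  shows "\<exists>t c. t \<noteq> 0 \<and> c \<noteq> 0 \<and> x = (\<lambda>is. c * tpow (Suc m) t is)"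
proof -
  have xt: "x \<in> tens (Suc m)" using x by (simp add: sym_tens_def)
  obtain l0 where l0: "length l0 = Suc m" "x l0 \<noteq> 0" using nonzero_entry[OF xt x(2)] .
  define t where "t = slice x (butlast l0)"
  define j0 where "j0 = last l0"
  have tW: "t \<in> contr_space (Suc m) x" unfolding t_def by (rule slice_in_contr_space) (use l0 in simp)
  have tj0: "t $ j0 \<noteq> 0" using l0 slice_butlast_last[of l0 x] by (cases l0) (auto simp: t_def j0_def)
  have D: "diagonal 1 (\<lambda>_. t) (\<lambda>_. j0)" using tj0 by (simp add: diagonal_def)
  have S: "(\<lambda>_::nat. t) ` {..<1} = {t}" by auto
  have "contr_space (Suc m) x \<subseteq> vec.span {t}"
    by (rule vec.card_ge_dim_independent) (use tW tj0 dim in auto)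
  then have slices: "slice x is \<in> vec.span {t}" if "length is = m" for "is"
    using slice_in_contr_space[of "is" "Suc m" x] that by auto
  define c where "c = x (replicate (Suc m) j0) / (t $ j0) ^ Suc m"
  have "x = (\<lambda>is. c * tpow (Suc m) t is)"
  proof (rule diagonal_fibers_proportional[OF xt _ D, unfolded S])
    show "tpow (Suc m) t \<in> tens (Suc m)" using tpow_sym[of "Suc m" t] by (simp add: sym_tens_def)
  next
    fix l :: "'a list" and p assume lp: "length l = Suc m" "p \<le> m"
    show "fiber x l p \<in> vec.span {t}"
      by (rule fiber_in_span[OF lp sym_swap[OF x(1) lp(2)] slices])
    show "fiber (tpow (Suc m) t) l p \<in> vec.span {t}"
      by (rule fiber_in_span[OF lp sym_swap[OF tpow_sym lp(2)] slice_tpow_in_span])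
  next
    fix l :: "'a list" assume "length l = Suc m" "set l \<subseteq> (\<lambda>_. j0) ` {..<1}"
    then have "l = replicate (Suc m) j0" by (intro replicate_eqI) auto
    moreover have "tpow (Suc m) t (replicate (Suc m) j0) = (t $ j0) ^ Suc m"
      by (simp add: tpow_def tprod_def del: replicate_Suc)
    ultimately show "x l = c * tpow (Suc m) t l" using tj0 by (simp add: c_def)
  qed
  moreover have "t \<noteq> 0" using tj0 by auto
  moreover from calculation have "c \<noteq> 0" using x(2) by auto
  ultimately show ?thesis by blast
qed

text \<open>If x(l0) \<noteq> 0, the slices of x through l0 with slot q freed (q < k) form a family that
  is diagonal with respect to the entries of l0, by antisymmetry.\<close>
lemma asym_diagonal_family:
  fixes x :: "('n::finite) tensor"
  assumes x: "x \<in> asym_tens (Suc m)" "x \<noteq> (\<lambda>_. 0)"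
  obtains s l0 where "length l0 = Suc m" "x l0 \<noteq> 0" "diagonal (Suc m) s (nth l0)"
    "\<And>q. q < Suc m \<Longrightarrow> s q \<in> contr_space (Suc m) x"
proof -
  have xt: "x \<in> tens (Suc m)" using x by (simp add: asym_tens_def)
  obtain l0 where l0: "length l0 = Suc m" "x l0 \<noteq> 0" using nonzero_entry[OF xt x(2)] .
  define e where "e q = (of_int (sign (Transposition.transpose q m)) :: complex)" for q
  define s where "s q = slice x (butlast (permute_list (Transposition.transpose q m) l0))" for q
  have s_entry: "s q $ j = e q * x (l0[q:=j])" if "q \<le> m" for q j
  proof -
    have "x (l0[q:=j]) = e q * s q $ j"
      using arg_cong[OF fiber_eq_slice[OF l0(1) that asym_swap[OF x(1) that]], of "\<lambda>v. v $ j"]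
      by (simp add: fiber_def e_def s_def)
    then show ?thesis using sign_squared[of "Transposition.transpose q m"]
      by (simp add: e_def mult.assoc[symmetric])
  qed
  have "diagonal (Suc m) s (nth l0)"
    unfolding diagonal_def
  proof (intro conjI allI impI)
    fix q assume "q < Suc m"
    then show "s q $ (l0 ! q) \<noteq> 0" using s_entry[of q] l0 sign_squared[of "Transposition.transpose q m"]
      by (auto simp: e_def)
  next
    fix q q' assume "q < Suc m" "q' < Suc m" "q \<noteq> q'"
    moreover have "x (l0[q := l0 ! q']) = 0"
      by (rule asym_repeated_index[OF x(1), of _ q q']) (use calculation l0 in \<open>auto simp: nth_list_update\<close>)
    ultimately show "s q $ (l0 ! q') = 0" using s_entry[of q] by simp
  qed
  moreover have "s q \<in> contr_space (Suc m) x" if "q < Suc m" for q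
    unfolding s_def by (rule slice_in_contr_space) (use l0 in simp)
  ultimately show ?thesis using that l0 by blast
qed

text \<open>The wedge of a family diagonal w.r.t. the entries of l does not vanish at l: only the
  identity permutation contributes.\<close>
lemma wedge_diagonal_nonzero:
  assumes l: "length l = k" and D: "diagonal k s (nth l)"
  shows "wedge k s l \<noteq> 0"
proof -
  let ?P = "{\<sigma>. \<sigma> permutes {..<k}}"
  have contribution: "of_int (sign \<sigma>) * tprod k (s \<circ> \<sigma>) l = (if \<sigma> = id then (\<Prod>p<k. s p $ (l ! p)) else 0)"
    if \<sigma>: "\<sigma> \<in> ?P" for \<sigma>
  proof (cases "\<sigma> = id")
    case True then show ?thesis using l by (simp add: tprod_def sign_id)
  next
    case False
    then obtain p where p: "p < k" "\<sigma> p \<noteq> p"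
      using \<sigma> permutes_not_in[of \<sigma> "{..<k}"] by (auto simp: fun_eq_iff)
    have "\<sigma> p < k" using permutes_in_image[of \<sigma> "{..<k}" p] \<sigma> p by auto
    then have "s (\<sigma> p) $ (l ! p) = 0" using D p by (simp add: diagonal_def)
    then have "(\<Prod>j<k. (s \<circ> \<sigma>) j $ (l ! j)) = 0" using p by (intro prod_zero) auto
    then show ?thesis using False l by (simp add: tprod_def)
  qed
  have "(\<Sum>\<sigma>\<in>?P. of_int (sign \<sigma>) * tprod k (s \<circ> \<sigma>) l)
      = (\<Sum>\<sigma>\<in>?P. if \<sigma> = id then (\<Prod>p<k. s p $ (l ! p)) else 0)"
    using contribution by (rule sum.cong[OF refl])
  also have "\<dots> = (\<Prod>p<k. s p $ (l ! p))"
    using permutes_id[of "{..<k}"] by (simp add: finite_permutations)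
  finally have "(\<Sum>\<sigma>\<in>?P. of_int (sign \<sigma>) * tprod k (s \<circ> \<sigma>) l) = (\<Prod>p<k. s p $ (l ! p))" .
  moreover have "(\<Prod>p<k. s p $ (l ! p)) \<noteq> 0" using D by (simp add: diagonal_def)
  ultimately show ?thesis by (simp add: wedge_def)
qed

lemma asym_nonzero_wedge:
  fixes x :: "('n::finite) tensor"
  assumes "x \<in> asym_tens (Suc m)" "x \<noteq> (\<lambda>_. 0)"
  obtains s :: "nat \<Rightarrow> complex^'n" where "wedge (Suc m) s \<noteq> (\<lambda>_. 0)"
proof -
  obtain s l0 where "length l0 = Suc m" "x l0 \<noteq> 0" "diagonal (Suc m) s (nth l0)"
    "\<And>q. q < Suc m \<Longrightarrow> s q \<in> contr_space (Suc m) x"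
    by (rule asym_diagonal_family[OF assms]) (rule that)
  then have "wedge (Suc m) s l0 \<noteq> 0" by (intro wedge_diagonal_nonzero)
  then have "wedge (Suc m) s \<noteq> (\<lambda>_. 0)" by auto
  then show ?thesis by (rule that)
qed

lemma asym_dim_lower:
  assumes "x \<in> asym_tens (Suc m)" "x \<noteq> (\<lambda>_. 0)"
  shows "Suc m \<le> vec.dim (contr_space (Suc m) x)"
proof -
  obtain s l0 where "length l0 = Suc m" "x l0 \<noteq> 0" and D: "diagonal (Suc m) s (nth l0)"
    and sW: "\<And>q. q < Suc m \<Longrightarrow> s q \<in> contr_space (Suc m) x"
    by (rule asym_diagonal_family[OF assms]) (rule that)
  show ?thesis
    using vec.independent_card_le_dim[of "s ` {..<Suc m}" "contr_space (Suc m) x"]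
      diagonal_independent[OF D] sW by auto
qed

subsection \<open>Antisymmetric tensors with a k-dimensional contraction space\<close>

lemma asym_structure:
  fixes x :: "('n::finite) tensor"
  assumes x: "x \<in> asym_tens (Suc m)" "x \<noteq> (\<lambda>_. 0)"
    and dim: "vec.dim (contr_space (Suc m) x) \<le> Suc m"
  shows "\<exists>s c. c \<noteq> 0 \<and> x = (\<lambda>is. c * wedge (Suc m) s is)"
proof -
  have xt: "x \<in> tens (Suc m)" using x by (simp add: asym_tens_def)
  obtain s l0 where l0: "length l0 = Suc m" "x l0 \<noteq> 0" and D: "diagonal (Suc m) s (nth l0)"
    and sW: "\<And>q. q < Suc m \<Longrightarrow> s q \<in> contr_space (Suc m) x"
    by (rule asym_diagonal_family[OF x]) (rule that)
  have "contr_space (Suc m) x \<subseteq> vec.span (s ` {..<Suc m})"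
    by (rule vec.card_ge_dim_independent) (use diagonal_independent[OF D] sW dim in auto)
  then have slices: "slice x is \<in> vec.span (s ` {..<Suc m})" if "length is = m" for "is"
    using slice_in_contr_space[of "is" "Suc m" x] that by auto
  define w where "w = wedge (Suc m) s"
  have wa: "w \<in> asym_tens (Suc m)" unfolding w_def by (rule wedge_asym)
  have wl0: "w l0 \<noteq> 0" unfolding w_def by (rule wedge_diagonal_nonzero[OF l0(1) D])
  define c where "c = x l0 / w l0"
  have "x = (\<lambda>is. c * w is)"
  proof (rule diagonal_fibers_proportional[OF xt _ D])
    show "w \<in> tens (Suc m)" using wa by (simp add: asym_tens_def)
  next
    fix l :: "'n list" and p assume lp: "length l = Suc m" "p \<le> m"
    show "fiber x l p \<in> vec.span (s ` {..<Suc m})"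
      by (rule fiber_in_span[OF lp asym_swap[OF x(1) lp(2)] slices])
    show "fiber w l p \<in> vec.span (s ` {..<Suc m})"
      by (rule fiber_in_span[OF lp asym_swap[OF wa lp(2)]]) (simp add: w_def slice_wedge_in_span)
  next
    fix l :: "'n list" assume l: "length l = Suc m" "set l \<subseteq> nth l0 ` {..<Suc m}"
    show "x l = c * w l"
    proof (rule asym_proportional_on_entries[OF x(1) wa l0(1) _ _ l(1)])
      show "distinct l0" by (rule asym_nonzero_distinct[OF x(1) l0])
      show "x l0 = c * w l0" using wl0 by (simp add: c_def)
      show "set l \<subseteq> set l0" using l l0 by (auto simp: set_conv_nth)
    qed
  qed
  moreover from calculation have "c \<noteq> 0" using x(2) by auto
  ultimately show ?thesis unfolding w_def by blast
qed

subsection \<open>Simple tensors and simple pure states\<close>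

lemma pstate_scale:
  assumes "c \<noteq> 0"
  shows "pstate k (\<lambda>is. c * v is) = pstate k v"
proof -
  have "complex_of_real (tnorm2 k (\<lambda>is. c * v is)) = complex_of_real ((cmod c)^2 * tnorm2 k v)"
    by (simp add: tnorm2_def norm_mult power_mult_distrib sum_distrib_left)
  also have "\<dots> = (c * cnj c) * complex_of_real (tnorm2 k v)"
    by (simp only: of_real_mult flip: complex_norm_square of_real_power)
  finally have den: "complex_of_real (tnorm2 k (\<lambda>is. c * v is)) = (c * cnj c) * complex_of_real (tnorm2 k v)" .
  have num: "c * v is * cnj (c * v js) = (c * cnj c) * (v is * cnj (v js))" for "is" js
    by (simp add: mult_ac)
  have "c * cnj c \<noteq> 0" using assms by simp
  then show ?thesis
    unfolding pstate_def fun_eq_iff num den by (simp only: mult_divide_mult_cancel_left simp_thms)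
qed

text \<open>x^k attains the least possible srank 1 among nonzero symmetric tensors.\<close>
lemma simple_sym_iff:
  fixes x :: "('n::finite) tensor"
  shows "simple_sym (Suc m) x \<longleftrightarrow> x \<in> sym_tens (Suc m) \<and> x \<noteq> (\<lambda>_. 0) \<and> srank (Suc m) x \<le> 1"
proof (intro iffI conjI)
  assume x: "simple_sym (Suc m) x"
  then show "x \<in> sym_tens (Suc m)" "x \<noteq> (\<lambda>_. 0)" by (simp_all add: simple_sym_def)
  define e :: "complex^'n" where "e = (\<chi> _. 1)"
  have "e \<noteq> 0" by (simp add: e_def vec_eq_iff)
  then have "srank (Suc m) x \<le> srank (Suc m) (tpow (Suc m) e)"
    using x tpow_sym[of "Suc m" e] tpow_nonzero by (auto simp: simple_sym_def)
  then show "srank (Suc m) x \<le> 1" using srank_tpow_le[of m e] by linarith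
next
  assume x: "x \<in> sym_tens (Suc m) \<and> x \<noteq> (\<lambda>_. 0) \<and> srank (Suc m) x \<le> 1"
  have "1 \<le> srank (Suc m) v" if "v \<in> sym_tens (Suc m)" "v \<noteq> (\<lambda>_. 0)" for v :: "'n tensor"
    using dim_contr_space_pos[of v m] dim_contr_space_le_srank[of "Suc m" v] that
    by (simp add: sym_tens_def)
  then show "simple_sym (Suc m) x" using x by (force simp: simple_sym_def)
qed

text \<open>A nonzero wedge attains the least possible srank k among nonzero antisymmetric tensors.\<close>
lemma simple_asym_iff:
  fixes x :: "('n::finite) tensor"
  shows "simple_asym (Suc m) x \<longleftrightarrow>
           x \<in> asym_tens (Suc m) \<and> x \<noteq> (\<lambda>_. 0) \<and> srank (Suc m) x \<le> Suc m"
proof (intro iffI conjI)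
  assume x: "simple_asym (Suc m) x"
  then show xa: "x \<in> asym_tens (Suc m)" "x \<noteq> (\<lambda>_. 0)" by (simp_all add: simple_asym_def)
  obtain s :: "nat \<Rightarrow> complex^'n" where "wedge (Suc m) s \<noteq> (\<lambda>_. 0)"
    using asym_nonzero_wedge[OF xa] .
  then have "srank (Suc m) x \<le> srank (Suc m) (wedge (Suc m) s)"
    using x wedge_asym[of "Suc m" s] by (auto simp: simple_asym_def)
  then show "srank (Suc m) x \<le> Suc m" using srank_wedge_le[of m s] by linarith
next
  assume x: "x \<in> asym_tens (Suc m) \<and> x \<noteq> (\<lambda>_. 0) \<and> srank (Suc m) x \<le> Suc m"
  have "Suc m \<le> srank (Suc m) v" if "v \<in> asym_tens (Suc m)" "v \<noteq> (\<lambda>_. 0)" for v :: "'n tensor"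
    using asym_dim_lower[OF that] dim_contr_space_le_srank[of "Suc m" v] by linarith
  then show "simple_asym (Suc m) x" using x by (force simp: simple_asym_def)
qed

lemma simple_bos_pure_eq_seg_sym_range:
  "{\<rho>. simple_bos_pure (Suc m) \<rho>} = (seg_sym_range (Suc m) :: ('n::finite) tmatrix set)"
proof safe
  fix \<rho> :: "'n tmatrix" assume "simple_bos_pure (Suc m) \<rho>"
  then obtain x :: "'n tensor" where x: "simple_sym (Suc m) x" "\<rho> = pstate (Suc m) x"
    by (auto simp: simple_bos_pure_def)
  have "vec.dim (contr_space (Suc m) x) \<le> 1"
    using x(1) dim_contr_space_le_srank[of "Suc m" x] by (simp add: simple_sym_iff)
  then obtain t c where "t \<noteq> 0" "c \<noteq> 0" "x = (\<lambda>is. c * tpow (Suc m) t is)"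
    using sym_structure[of x m] x(1) by (auto simp: simple_sym_def)
  then show "\<rho> \<in> seg_sym_range (Suc m)"
    using x(2) pstate_scale by (auto simp: seg_sym_range_def)
next
  fix \<rho> :: "'n tmatrix" assume "\<rho> \<in> seg_sym_range (Suc m)"
  then obtain t :: "complex^'n" where t: "t \<noteq> 0" "\<rho> = pstate (Suc m) (tpow (Suc m) t)"
    by (auto simp: seg_sym_range_def)
  have "simple_sym (Suc m) (tpow (Suc m) t)"
    using srank_tpow_le[of m t] t(1) by (simp add: simple_sym_iff tpow_sym tpow_nonzero)
  then show "simple_bos_pure (Suc m) \<rho>" using t(2) by (auto simp: simple_bos_pure_def)
qed

lemma simple_ferm_pure_eq_seg_asym_range:
  "{\<rho>. simple_ferm_pure (Suc m) \<rho>} = (seg_asym_range (Suc m) :: ('n::finite) tmatrix set)"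
proof safe
  fix \<rho> :: "'n tmatrix" assume "simple_ferm_pure (Suc m) \<rho>"
  then obtain x :: "'n tensor" where x: "simple_asym (Suc m) x" "\<rho> = pstate (Suc m) x"
    by (auto simp: simple_ferm_pure_def)
  have "vec.dim (contr_space (Suc m) x) \<le> Suc m"
    using x(1) dim_contr_space_le_srank[of "Suc m" x] by (simp add: simple_asym_iff)
  then obtain s c where c: "c \<noteq> 0" and xs: "x = (\<lambda>is. c * wedge (Suc m) s is)"
    using asym_structure[of x m] x(1) by (auto simp: simple_asym_def)
  have "wedge (Suc m) s \<noteq> (\<lambda>_. 0)" using x(1) xs by (auto simp: simple_asym_def)
  moreover have "\<rho> = pstate (Suc m) (wedge (Suc m) s)" using x(2) xs pstate_scale[OF c] by simp
  ultimately show "\<rho> \<in> seg_asym_range (Suc m)" by (auto simp: seg_asym_range_def)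
next
  fix \<rho> :: "'n tmatrix" assume "\<rho> \<in> seg_asym_range (Suc m)"
  then obtain s :: "nat \<Rightarrow> complex^'n"
    where s: "wedge (Suc m) s \<noteq> (\<lambda>_. 0)" "\<rho> = pstate (Suc m) (wedge (Suc m) s)"
    by (auto simp: seg_asym_range_def)
  have "simple_asym (Suc m) (wedge (Suc m) s)"
    using s(1) by (simp add: simple_asym_iff wedge_asym srank_wedge_le)
  then show "simple_ferm_pure (Suc m) \<rho>" using s(2) by (auto simp: simple_ferm_pure_def)
qed

theorem mainTheorem1:
  fixes k :: nat
  assumes "k \<ge> 2"
  shows "(\<forall>\<rho> :: ('n::finite) tmatrix. bos_pure k \<rho> \<longrightarrow>
            (\<not> simple_bos_pure k \<rho> \<longleftrightarrow> \<rho> \<notin> seg_sym_range k))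
       \<and> (\<forall>\<rho> :: 'n tmatrix. ferm_pure k \<rho> \<longrightarrow>
            (\<not> simple_ferm_pure k \<rho> \<longleftrightarrow> \<rho> \<notin> seg_asym_range k))
       \<and> (\<forall>\<rho> :: 'n tmatrix. bos_mixed k \<rho> \<longrightarrow>
            (\<not> simple_bos_mixed k \<rho> \<longleftrightarrow> \<rho> \<notin> cconv (seg_sym_range k)))
       \<and> (\<forall>\<rho> :: 'n tmatrix. ferm_mixed k \<rho> \<longrightarrow>
            (\<not> simple_ferm_mixed k \<rho> \<longleftrightarrow> \<rho> \<notin> cconv (seg_asym_range k)))"
proof -
  obtain m where k: "k = Suc m" using assms by (cases k) auto
  have bos: "{\<sigma>. simple_bos_pure k \<sigma>} = (seg_sym_range k :: 'n tmatrix set)"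
    unfolding k by (rule simple_bos_pure_eq_seg_sym_range)
  have ferm: "{\<sigma>. simple_ferm_pure k \<sigma>} = (seg_asym_range k :: 'n tmatrix set)"
    unfolding k by (rule simple_ferm_pure_eq_seg_asym_range)
  show ?thesis
    unfolding simple_bos_mixed_def simple_ferm_mixed_def bos ferm
    using bos ferm by blast
qed

end
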